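(* For odd integers $r,t\ge1$, in $S_{\mathrm{alg}}$, $$(r-1)!\,h[-r]h[-1]^t\mathbf 1=\sum_{n\ge0}\sum_{k\ge0}\binom{t}{2k}\frac{n!\,S_r^{(n+1)}(2k)!}{k!\,(-24)^k}\,h(-n-1)h(-1)^{t-2k}\mathbf 1-\sum_{k\ge0}\binom{t}{2k+1}\frac{B_{r+1}(2k+1)!}{k!\,(r+1)(-24)^k}\,h(-1)^{t-2k-1}\mathbf 1,$$ where $S_r^{(n+1)}=\frac1{n!}\sum_{j\ge0}\binom nj(-1)^{n+j}(j+1)^{r-1}$.
   Context: $S_{\mathrm{alg}}=\mathbb{Q}[h(-1),h(-2),\dots]$ is the rank-one Heisenberg VOA with vacuum $\mathbf 1=1$; $h(n)$ for $n<0$ is multiplication by $h(n)$, $h(0)=0$, and $h(n)=n\,\partial/\partial h(-n)$ for $n>0$. With $h(z)=\sum_n h(n)z^{-n-1}$, the square-bracket modes are $h[n]=\mathrm{Res}_z\,h(e^z-1)e^zz^n=\mathrm{Res}_w\,h(w)(\log(1+w))^n$, i.e. $h[n]=\sum_m\mathrm{Coeff}_{w^m}\big((\log(1+w))^n\big)h(m)$. $B_k$ are the Bernoulli numbers ($B_2=1/6$, $B_4=-1/30$). *)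

theory Defs
  imports "HOL-Library.Poly_Mapping" "HOL-Computational_Algebra.Formal_Laurent_Series"
begin

text \<open>The rank-one Heisenberg VOA S_alg = Q[h(-1),h(-2),...], modelled as the polynomial
  ring over Q in the variables x_1, x_2, ...: a polynomial is a finitely supported map from
  monomials (finitely supported exponent vectors nat =>0 nat) to rational coefficients.
  The variable with index n (n >= 1) represents h(-n). The vacuum is the polynomial 1.\<close>

type_synonym salg = "(nat \<Rightarrow>\<^sub>0 nat) \<Rightarrow>\<^sub>0 rat"

definition sconst :: "rat \<Rightarrow> salg" where
  "sconst c = Poly_Mapping.single 0 c"

definition hvar :: "nat \<Rightarrow> salg" where
  "hvar n = Poly_Mapping.single (Poly_Mapping.single n 1) 1"

definition pdiff :: "nat \<Rightarrow> salg \<Rightarrow> salg" where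
  "pdiff i p = Abs_poly_mapping (\<lambda>m::nat \<Rightarrow>\<^sub>0 nat. of_nat (Poly_Mapping.lookup m i + 1) * Poly_Mapping.lookup p (m + Poly_Mapping.single i (1::nat)))"

lemma lookup_pdiff:
  "Poly_Mapping.lookup (pdiff i p) m = of_nat (Poly_Mapping.lookup m i + 1) * Poly_Mapping.lookup p (m + Poly_Mapping.single i (1::nat))"
proof -
  have "{m::nat \<Rightarrow>\<^sub>0 nat. of_nat (Poly_Mapping.lookup m i + 1) * Poly_Mapping.lookup p (m + Poly_Mapping.single i (1::nat)) \<noteq> (0::rat)}
        \<subseteq> (\<lambda>m. m - Poly_Mapping.single i 1) ` Poly_Mapping.keys p"
  proof
    fix m assume "m \<in> {m::nat \<Rightarrow>\<^sub>0 nat. of_nat (Poly_Mapping.lookup m i + 1) * Poly_Mapping.lookup p (m + Poly_Mapping.single i (1::nat)) \<noteq> (0::rat)}"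
    hence "m + Poly_Mapping.single i 1 \<in> Poly_Mapping.keys p" by (auto intro: lookup_not_eq_zero_eq_in_keys[THEN iffD1])
    moreover have "m = (m + Poly_Mapping.single i 1) - Poly_Mapping.single i 1" by simp
    ultimately show "m \<in> (\<lambda>m. m - Poly_Mapping.single i 1) ` Poly_Mapping.keys p" by blast
  qed
  hence "finite {m::nat \<Rightarrow>\<^sub>0 nat. of_nat (Poly_Mapping.lookup m i + 1) * Poly_Mapping.lookup p (m + Poly_Mapping.single i (1::nat)) \<noteq> (0::rat)}"
    by (rule finite_subset) simp
  thus ?thesis unfolding pdiff_def by (simp add: Abs_poly_mapping_inverse)
qed

definition hmode :: "int \<Rightarrow> salg \<Rightarrow> salg" where
  "hmode n v = (if n < 0 then hvar (nat (- n)) * v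
                else if n = 0 then 0
                else sconst (of_int n) * pdiff (nat n) v)"

definition logL :: "rat fls" where
  "logL = fps_to_fls (fps_ln 1)"

text \<open>The sum is over all integers m; only finitely many summands are nonzero
  (the coefficients vanish for m < n, and h(m) v = 0 for m large), so we sum
  over the (finite) set of indices with nonzero summand.\<close>
definition hsq :: "int \<Rightarrow> salg \<Rightarrow> salg" where
  "hsq n v = (\<Sum>m\<in>{m. fls_nth (logL powi n) m \<noteq> 0 \<and> hmode m v \<noteq> 0}.
                 sconst (fls_nth (logL powi n) m) * hmode m v)"

text \<open>Bernoulli numbers via the generating function x/(e^x - 1) (so B_1 = -1/2,
  B_2 = 1/6, B_4 = -1/30).\<close>
definition bernoulli :: "nat \<Rightarrow> rat" where
  "bernoulli k = fact k * fps_nth (fps_X / (fps_exp 1 - 1)) k"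

text \<open>S_r^{(n+1)} = 1/n! * sum_{j>=0} binom(n,j) (-1)^(n+j) (j+1)^(r-1);
  the binomial vanishes for j > n.\<close>
definition Scoef :: "nat \<Rightarrow> nat \<Rightarrow> rat" where
  "Scoef r n = (1 / fact n) * (\<Sum>j\<le>n. of_nat (n choose j) * (-1) ^ (n + j) * of_nat (j + 1) ^ (r - 1))"

end

theory Submission
  imports Defs
begin

text \<open>Write \<open>q(w) = log(1+w)\<close> and \<open>c(m) = [w^m] q(w)^(-r)\<close>. On polynomials in \<open>x = h(-1)\<close> alone,
  \<open>h(m)\<close> vanishes for \<open>m \<ge> 2\<close> and \<open>h(1)\<close> acts as \<open>d/dx\<close>, so \<open>h[-r]\<close> acts as
  \<open>\<Sum>n<r. c(-n-1) h(-n-1) + c(1) d/dx\<close>. In particular \<open>h[-1] = x - (1/12) d/dx\<close> there, so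
  \<open>h[-1]^t 1\<close> is an explicit Hermite polynomial. The coefficients \<open>c(m)\<close> are computed by
  substituting \<open>w = e^y - 1\<close>, the compositional inverse of \<open>q\<close>: this change of variables in
  the residue gives \<open>c(-n-1) = [y^(r-1)] (e^y - 1)^n e^y = n! S_r^(n+1) / (r-1)!\<close>, and
  expresses \<open>c(1)\<close> through the coefficients of \<open>y/(e^y - 1)\<close>, i.e. Bernoulli numbers.\<close>

definition fps_expm1 :: "'a::field_char_0 fps" where
  "fps_expm1 = fps_exp 1 - 1"

definition fps_expm1_quot :: "'a::field_char_0 fps" where
  "fps_expm1_quot = Abs_fps (\<lambda>n. 1 / fact (Suc n))"

definition fps_ln1p_quot :: "'a::field_char_0 fps" where
  "fps_ln1p_quot = Abs_fps (\<lambda>n. (-1) ^ n / of_nat (Suc n))"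

lemma fps_expm1_eq_X_mult: "fps_expm1 = fps_X * fps_expm1_quot"
  by (rule fps_ext) (auto simp: fps_expm1_def fps_expm1_quot_def fact_reduce)

lemma fps_ln_1_eq_X_mult: "fps_ln 1 = fps_X * fps_ln1p_quot"
  by (rule fps_ext) (auto simp: fps_ln1p_quot_def fps_ln_nth)

lemma fps_expm1_nth_0 [simp]: "fps_expm1 $ 0 = 0"
  by (simp add: fps_expm1_def)

lemma fps_expm1_quot_nth_0 [simp]: "fps_expm1_quot $ 0 = 1"
  by (simp add: fps_expm1_quot_def)

lemma fps_ln1p_quot_nth_0 [simp]: "fps_ln1p_quot $ 0 = 1"
  by (simp add: fps_ln1p_quot_def)

lemma fps_deriv_expm1: "fps_deriv fps_expm1 = fps_exp 1"
  by (simp add: fps_expm1_def)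

text \<open>Change of variables \<open>x = E(y)\<close>, \<open>E = y e(y)\<close>, in a residue: \<open>[x^k] F = res F(E) E' / E^(k+1)\<close>,
  i.e. the coefficient of \<open>y^k\<close> in \<open>F(E) E' / e^(k+1)\<close>.\<close>

lemma fps_nth_inverse_power_mult_deriv:
  fixes e :: "'a::field_char_0 fps"
  assumes e0: "e $ 0 \<noteq> 0"
  shows "(inverse e ^ Suc m * fps_deriv (fps_X * e)) $ m = (if m = 0 then 1 else 0)"
proof (cases "m = 0")
  case True
  with e0 show ?thesis by simp
next
  case False
  define g where "g = inverse e"
  have "g * e = 1"
    using e0 by (simp add: g_def inverse_mult_eq_1)
  hence ge: "g ^ Suc m * e = g ^ m"
    by (simp add: mult.assoc mult.commute[of g e])
  have dg: "fps_deriv g = - fps_deriv e * g\<^sup>2"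
    unfolding g_def using e0 by (rule fps_inverse_deriv)
  have dgm: "fps_deriv (g ^ m) = - of_nat m * (fps_deriv e * g ^ Suc m)"
  proof -
    have "fps_deriv (g ^ m) = of_nat m * fps_deriv g * g ^ (m - 1)"
      by (rule fps_deriv_power')
    moreover have "g\<^sup>2 * g ^ (m - 1) = g ^ Suc m"
      using False by (simp flip: power_add)
    ultimately show ?thesis
      by (simp add: dg mult.assoc)
  qed
  txt \<open>For \<open>m > 0\<close> the residue vanishes because \<open>E'/E^(m+1)\<close> is the derivative of \<open>-E^(-m)/m\<close>.\<close>
  have "g ^ Suc m * fps_deriv (fps_X * e) = fps_X * (fps_deriv e * g ^ Suc m) + g ^ m"
    using ge by (simp add: algebra_simps)
  hence "(g ^ Suc m * fps_deriv (fps_X * e)) $ m = (fps_deriv e * g ^ Suc m) $ (m - 1) + g ^ m $ m"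
    using False by simp
  moreover have "of_nat m * g ^ m $ m = - of_nat m * (fps_deriv e * g ^ Suc m) $ (m - 1)"
    using arg_cong[OF dgm, of "\<lambda>f. f $ (m - 1)"] False
    by (simp flip: fps_of_nat)
  ultimately have "of_nat m * (g ^ Suc m * fps_deriv (fps_X * e)) $ m = 0"
    by (simp add: algebra_simps)
  with False show ?thesis
    by (simp add: g_def)
qed

lemma fps_nth_X_mult_power_mult_inverse_power_deriv:
  fixes e :: "'a::field_char_0 fps"
  assumes e0: "e $ 0 \<noteq> 0" and "j \<le> k"
  shows "((fps_X * e) ^ j * (inverse e ^ Suc k * fps_deriv (fps_X * e))) $ k = (if j = k then 1 else 0)"
proof -
  define D where "D = fps_deriv (fps_X * e)"
  have cancel: "e ^ j * inverse e ^ j = 1"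
    using e0 by (simp flip: power_mult_distrib add: inverse_mult_eq_1 mult.commute[of e])
  have split: "inverse e ^ Suc k = inverse e ^ j * inverse e ^ Suc (k - j)"
    using \<open>j \<le> k\<close> by (simp flip: power_add)
  have "(fps_X * e) ^ j * (inverse e ^ Suc k * D) = fps_X ^ j * ((e ^ j * inverse e ^ j) * (inverse e ^ Suc (k - j) * D))"
    by (simp only: power_mult_distrib split mult.assoc)
  hence "(fps_X * e) ^ j * (inverse e ^ Suc k * D) = fps_X ^ j * (inverse e ^ Suc (k - j) * D)"
    by (simp only: cancel mult_1_left)
  hence "((fps_X * e) ^ j * (inverse e ^ Suc k * D)) $ k = (inverse e ^ Suc (k - j) * D) $ (k - j)"
    using \<open>j \<le> k\<close> by (simp only: fps_X_power_mult_nth) simp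
  also have "\<dots> = (if j = k then 1 else 0)"
    using fps_nth_inverse_power_mult_deriv[OF e0, of "k - j", folded D_def] \<open>j \<le> k\<close> by simp
  finally show ?thesis
    by (simp only: D_def)
qed

lemma fps_nth_eq_nth_compose_X_mult:
  fixes e :: "'a::field_char_0 fps"
  assumes e0: "e $ 0 \<noteq> 0"
  shows "F $ k = ((F oo (fps_X * e)) * (inverse e ^ Suc k * fps_deriv (fps_X * e))) $ k"
proof -
  define E where "E = fps_X * e"
  define H where "H = inverse e ^ Suc k * fps_deriv E"
  have E_power_nth: "E ^ j $ i = 0" if "i < j" for i j
    using startsby_zero_power_prefix[of E] that by (simp add: E_def)
  have "((F oo E) * H) $ k = (\<Sum>i=0..k. \<Sum>j=0..k. F $ j * (E ^ j $ i * H $ (k - i)))"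
  proof -
    have "(\<Sum>j=0..i. F $ j * E ^ j $ i) = (\<Sum>j=0..k. F $ j * E ^ j $ i)" if "i \<le> k" for i
      by (rule sum.mono_neutral_left) (use that E_power_nth in auto)
    thus ?thesis
      by (simp add: fps_mult_nth fps_compose_nth sum_distrib_right mult.assoc)
  qed
  also have "\<dots> = (\<Sum>j=0..k. F $ j * (E ^ j * H) $ k)"
    by (subst sum.swap) (simp add: fps_mult_nth sum_distrib_left)
  also have "\<dots> = (\<Sum>j=0..k. if j = k then F $ j else 0)"
    using fps_nth_X_mult_power_mult_inverse_power_deriv[OF e0, of _ k]
    by (intro sum.cong) (simp_all add: E_def H_def)
  finally show ?thesis
    by (simp add: E_def H_def)
qed

lemma fps_ln1p_quot_compose_expm1: "fps_ln1p_quot oo fps_expm1 = inverse (fps_expm1_quot :: 'a::field_char_0 fps)"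
proof -
  have "fps_ln 1 oo fps_expm1 = (fps_X :: 'a fps)"
    unfolding fps_expm1_def fps_ln_fps_exp_inv[of 1, simplified]
    by (rule fps_inv_fps_exp_compose) simp
  hence "fps_expm1 * (fps_ln1p_quot oo fps_expm1) = (fps_X :: 'a fps)"
    by (simp add: fps_ln_1_eq_X_mult fps_compose_mult_distrib)
  hence "fps_X * (fps_expm1_quot * (fps_ln1p_quot oo fps_expm1)) = fps_X * (1 :: 'a fps)"
    by (simp add: fps_expm1_eq_X_mult mult.assoc)
  hence "fps_expm1_quot * (fps_ln1p_quot oo fps_expm1) = (1 :: 'a fps)"
    by (simp add: fps_X_neq_zero)
  thus ?thesis
    by (metis fps_inverse_unique mult.commute)
qed

definition fps_X_over_ln1p_power :: "nat \<Rightarrow> 'a::field_char_0 fps" where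
  "fps_X_over_ln1p_power r = inverse fps_ln1p_quot ^ r"

lemma fps_X_over_ln1p_power_compose_expm1: "fps_X_over_ln1p_power r oo fps_expm1 = fps_expm1_quot ^ r"
proof -
  have "inverse fps_ln1p_quot oo fps_expm1 = inverse (fps_ln1p_quot oo (fps_expm1 :: 'a fps))"
    by (rule fps_inverse_compose) simp_all
  thus ?thesis
    unfolding fps_X_over_ln1p_power_def fps_ln1p_quot_compose_expm1
    by (simp add: fps_compose_power[symmetric])
qed

lemma fps_nth_via_expm1:
  "F $ k = ((F oo fps_expm1) * (inverse fps_expm1_quot ^ Suc k * fps_deriv fps_expm1)) $ k"
  unfolding fps_expm1_eq_X_mult by (rule fps_nth_eq_nth_compose_X_mult) simp

lemma fps_X_over_ln1p_power_nth_less: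
  assumes "n < r"
  shows "fps_X_over_ln1p_power r $ (r - 1 - n) = (fps_expm1 ^ n * fps_exp 1) $ (r - 1)"
proof -
  define e :: "'a fps" where "e = fps_expm1_quot"
  define k where "k = r - 1 - n"
  have r: "r = n + Suc k"
    using assms by (simp add: k_def)
  have cancel: "e ^ Suc k * inverse e ^ Suc k = 1"
    unfolding power_mult_distrib[symmetric] by (simp add: e_def inverse_mult_eq_1')
  have "fps_X_over_ln1p_power r $ k = (e ^ r * (inverse e ^ Suc k * fps_deriv fps_expm1)) $ k"
    using fps_nth_via_expm1[of "fps_X_over_ln1p_power r" k]
    by (simp only: fps_X_over_ln1p_power_compose_expm1 e_def)
  also have "e ^ r * (inverse e ^ Suc k * fps_deriv fps_expm1)
      = e ^ n * ((e ^ Suc k * inverse e ^ Suc k) * fps_exp 1)"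
    by (subst r) (simp only: power_add mult.assoc fps_deriv_expm1)
  also have "\<dots> = e ^ n * fps_exp 1"
    by (simp only: cancel mult_1_left)
  also have "(e ^ n * fps_exp 1) $ k = (fps_X ^ n * (e ^ n * fps_exp 1)) $ (r - 1)"
    using assms by (simp add: k_def fps_X_power_mult_nth)
  also have "fps_X ^ n * (e ^ n * fps_exp 1) = fps_expm1 ^ n * fps_exp 1"
    by (simp add: e_def fps_expm1_eq_X_mult power_mult_distrib mult.assoc)
  finally show ?thesis
    by (simp only: k_def)
qed

lemma fps_X_over_ln1p_power_nth_Suc:
  "fps_X_over_ln1p_power r $ Suc r = - of_nat r * inverse fps_expm1_quot $ Suc r"
proof -
  define e :: "'a fps" where "e = fps_expm1_quot"
  have e_inv: "e * inverse e = 1"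
    by (simp add: e_def inverse_mult_eq_1')
  have "e ^ r * inverse e ^ Suc (Suc r) = (e * inverse e) ^ r * (inverse e)\<^sup>2"
    by (simp only: power_mult_distrib power_add mult.assoc flip: add_2_eq_Suc')
  hence cancel: "e ^ r * inverse e ^ Suc (Suc r) = (inverse e)\<^sup>2"
    by (simp add: e_inv)
  have deriv_inverse: "fps_deriv (inverse e) = - fps_deriv e * (inverse e)\<^sup>2"
    by (rule fps_inverse_deriv) (simp add: e_def)
  have "(inverse e)\<^sup>2 * e = inverse e"
    using e_inv by (simp add: power2_eq_square mult.assoc mult.commute[of _ e])
  have "fps_X_over_ln1p_power r $ Suc r = (e ^ r * (inverse e ^ Suc (Suc r) * fps_deriv fps_expm1)) $ Suc r"
    using fps_nth_via_expm1[of "fps_X_over_ln1p_power r" "Suc r"]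
    by (simp only: fps_X_over_ln1p_power_compose_expm1 e_def)
  also have "e ^ r * (inverse e ^ Suc (Suc r) * fps_deriv fps_expm1) = (inverse e)\<^sup>2 * fps_deriv (fps_X * e)"
    unfolding mult.assoc[symmetric] cancel by (simp only: fps_expm1_eq_X_mult e_def)
  also have "\<dots> = inverse e - fps_X * fps_deriv (inverse e)"
    using deriv_inverse \<open>(inverse e)\<^sup>2 * e = inverse e\<close> by (simp add: distrib_left distrib_right ac_simps)
  finally show ?thesis
    by (simp add: e_def algebra_simps)
qed

lemma bernoulli_eq_fact_mult_nth: "bernoulli k = fact k * inverse fps_expm1_quot $ k"
proof -
  have "fps_X / (fps_exp 1 - 1) = fps_X / (fps_X * fps_expm1_quot :: rat fps)"
    by (simp flip: fps_expm1_def fps_expm1_eq_X_mult)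
  also have "\<dots> = inverse fps_expm1_quot"
    by (simp add: fps_divide_unit fps_X_neq_zero)
  finally show ?thesis
    by (simp add: bernoulli_def)
qed

lemma bernoulli_2: "bernoulli 2 = 1/6"
proof -
  have e: "fps_expm1_quot $ Suc 0 = (1/2 :: rat)" "fps_expm1_quot $ Suc (Suc 0) = (1/6 :: rat)"
    by (simp_all add: fps_expm1_quot_def)
  have "(inverse fps_expm1_quot * fps_expm1_quot :: rat fps) = 1"
    by (simp add: inverse_mult_eq_1)
  hence "(inverse fps_expm1_quot * fps_expm1_quot :: rat fps) $ 1 = 0"
    and "(inverse fps_expm1_quot * fps_expm1_quot :: rat fps) $ 2 = 0"
    by simp_all
  hence "inverse fps_expm1_quot $ 1 = (-1/2 :: rat)" "inverse fps_expm1_quot $ 2 = (1/12 :: rat)"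
    by (simp_all add: fps_mult_nth numeral_2_eq_2 e)
  thus ?thesis
    by (simp add: bernoulli_eq_fact_mult_nth)
qed

lemma fps_expm1_power_mult_exp_nth:
  "(fps_expm1 ^ n * fps_exp 1 :: 'a::field_char_0 fps) $ k
     = (\<Sum>j\<le>n. of_nat (n choose j) * (-1) ^ (n - j) * of_nat (Suc j) ^ k) / fact k"
proof -
  have exp_power: "fps_exp 1 ^ j * fps_exp 1 = fps_exp (of_nat (Suc j) :: 'a)" for j
    by (simp add: fps_exp_power_mult flip: fps_exp_add_mult)
  have sign: "(-1 :: 'a fps) ^ m = fps_const ((-1) ^ m)" for m
    by (simp flip: fps_const_power fps_const_neg)
  have summand: "of_nat c * fps_exp 1 ^ j * (-1) ^ m * fps_exp 1
      = fps_const (of_nat c * (-1) ^ m) * fps_exp (of_nat (Suc j) :: 'a)" for c j m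
  proof -
    have "of_nat c * fps_exp 1 ^ j * (-1) ^ m * fps_exp 1
        = fps_const (of_nat c) * fps_const ((-1) ^ m) * (fps_exp 1 ^ j * fps_exp (1 :: 'a))"
      by (simp only: sign ac_simps flip: fps_of_nat)
    thus ?thesis
      by (simp only: exp_power fps_const_mult)
  qed
  have "fps_expm1 ^ n * fps_exp 1
      = (\<Sum>j\<le>n. of_nat (n choose j) * fps_exp 1 ^ j * (-1) ^ (n - j) * fps_exp (1 :: 'a))"
    unfolding fps_expm1_def using binomial_ring[of "fps_exp (1::'a)" "-1" n]
    by (simp add: sum_distrib_right)
  thus ?thesis
    by (simp add: summand fps_sum_nth sum_divide_distrib)
qed

lemma fps_expm1_power_mult_exp_nth_less:
  assumes "k < n"
  shows "(fps_expm1 ^ n * fps_exp 1 :: 'a::field_char_0 fps) $ k = 0"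
proof -
  have eq: "fps_expm1 ^ n * fps_exp 1 = fps_X ^ n * (fps_expm1_quot ^ n * fps_exp (1 :: 'a))"
    by (simp add: fps_expm1_eq_X_mult power_mult_distrib mult.assoc)
  show ?thesis
    unfolding eq fps_X_power_mult_nth using assms by simp
qed

lemma fact_mult_Scoef:
  "fact n * Scoef r n = fact (r - 1) * (fps_expm1 ^ n * fps_exp 1) $ (r - 1)"
proof -
  have "(-1 :: rat) ^ (n + j) = (-1) ^ (n - j)" if "j \<le> n" for j
  proof -
    have "n + j = (n - j) + 2 * j"
      using that by simp
    thus ?thesis
      by (simp only: power_add power_mult) simp
  qed
  thus ?thesis
    by (simp add: Scoef_def fps_expm1_power_mult_exp_nth)
qed

lemma Scoef_eq_0:
  assumes "1 \<le> r" "r \<le> n"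
  shows "Scoef r n = 0"
proof -
  have "(fps_expm1 ^ n * fps_exp 1 :: rat fps) $ (r - 1) = 0"
    by (rule fps_expm1_power_mult_exp_nth_less) (use assms in simp)
  thus ?thesis
    using fact_mult_Scoef[of n r] by simp
qed

lemma logL_powi_neg: "logL powi (- int r) = fls_shift (int r) (fps_to_fls (fps_X_over_ln1p_power r))"
proof -
  have "fps_ln1p_quot ^ r * inverse fps_ln1p_quot ^ r = (1 :: rat fps)"
    unfolding power_mult_distrib[symmetric] by (simp add: inverse_mult_eq_1')
  hence "(fps_X * fps_ln1p_quot) ^ r * fps_X_over_ln1p_power r = (fps_X ^ r :: rat fps)"
    by (simp add: fps_X_over_ln1p_power_def power_mult_distrib mult.assoc)
  hence "logL ^ r * fls_shift (int r) (fps_to_fls (fps_X_over_ln1p_power r))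
      = fls_shift (int r) (fps_to_fls (fps_X ^ r))"
    unfolding logL_def fps_ln_1_eq_X_mult
    by (simp only: fls_shifted_times_simps(1) flip: fps_to_fls_power fls_times_fps_to_fls)
  also have "\<dots> = 1"
    by (simp add: fps_to_fls_power fls_X_power_conv_shift_1)
  finally show ?thesis
    by (simp add: power_int_minus inverse_unique)
qed

lemma fls_nth_logL_powi_neg:
  "fls_nth (logL powi (- int r)) m = (if m < - int r then 0 else fps_X_over_ln1p_power r $ nat (m + int r))"
  by (simp add: logL_powi_neg)

lemma fact_mult_fls_nth_logL_powi_neg_less:
  assumes "n < r"
  shows "fact (r - 1) * fls_nth (logL powi (- int r)) (- int (Suc n)) = fact n * Scoef r n"
proof -
  have "nat (- int (Suc n) + int r) = r - 1 - n"
    using assms by simp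
  thus ?thesis
    using assms fps_X_over_ln1p_power_nth_less[OF assms]
    by (simp add: fls_nth_logL_powi_neg fact_mult_Scoef)
qed

lemma fact_mult_fls_nth_logL_powi_neg_1:
  assumes "1 \<le> r"
  shows "fact (r - 1) * fls_nth (logL powi (- int r)) 1 = - bernoulli (r + 1) / of_nat (r + 1)"
proof -
  have "fact (Suc r) = of_nat (Suc r) * (of_nat r * fact (r - 1) :: rat)"
    using assms by (cases r) simp_all
  thus ?thesis
    by (simp add: fls_nth_logL_powi_neg nat_add_distrib fps_X_over_ln1p_power_nth_Suc
        bernoulli_eq_fact_mult_nth field_simps)
qed

lemma fls_nth_logL_inverse: "fls_nth (logL powi -1) (-1) = 1" "fls_nth (logL powi -1) 1 = -1/12"
  using fact_mult_fls_nth_logL_powi_neg_less[of 0 1] fact_mult_fls_nth_logL_powi_neg_1[of 1]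
  by (simp_all add: Scoef_def bernoulli_2[unfolded numeral_2_eq_2])

lemma sconst_0 [simp]: "sconst 0 = 0"
  by (simp add: sconst_def)

lemma sconst_1 [simp]: "sconst 1 = 1"
  by (simp add: sconst_def)

lemma sconst_diff: "sconst (a - b) = sconst a - sconst b"
  by (simp add: sconst_def single_diff)

lemma sconst_mult: "sconst (a * b) = sconst a * sconst b"
  by (simp add: sconst_def mult_single)

lemma sconst_mult_hvar_power:
  "sconst c * hvar i ^ a = Poly_Mapping.single (Poly_Mapping.single i a) c"
proof (induction a)
  case 0
  show ?case by (simp add: sconst_def)
next
  case (Suc a)
  have "sconst c * hvar i ^ Suc a = hvar i * (sconst c * hvar i ^ a)"
    by (simp only: power_Suc ac_simps)
  thus ?case
    by (simp only: Suc.IH) (simp add: hvar_def mult_single flip: single_add)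
qed

lemma pdiff_add: "pdiff i (p + q) = pdiff i p + pdiff i q"
  by (rule poly_mapping_eqI) (simp add: lookup_pdiff lookup_add algebra_simps)

lemma pdiff_0 [simp]: "pdiff i 0 = 0"
  by (rule poly_mapping_eqI) (simp add: lookup_pdiff)

lemma pdiff_sum: "pdiff i (\<Sum>x\<in>S. f x) = (\<Sum>x\<in>S. pdiff i (f x))"
  by (induction S rule: infinite_finite_induct) (simp_all add: pdiff_add)

lemma pdiff_monomial:
  "pdiff j (sconst c * hvar i ^ a) = (if j = i then sconst (of_nat a * c) * hvar i ^ (a - 1) else 0)"
proof (rule poly_mapping_eqI)
  fix m :: "nat \<Rightarrow>\<^sub>0 nat"
  have key: "Poly_Mapping.single i a = m + Poly_Mapping.single j 1
      \<longleftrightarrow> j = i \<and> 0 < a \<and> m = Poly_Mapping.single i (a - 1)"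
  proof
    assume eq: "Poly_Mapping.single i a = m + Poly_Mapping.single j 1"
    hence "Poly_Mapping.lookup (Poly_Mapping.single i a) j = Poly_Mapping.lookup m j + 1"
      by (simp add: lookup_add lookup_single)
    hence ji: "j = i \<and> 0 < a"
      by (auto simp: lookup_single when_def split: if_splits)
    hence "Poly_Mapping.single i (a - 1) + Poly_Mapping.single j 1 = m + Poly_Mapping.single j 1"
      using eq by (simp flip: single_add)
    with ji show "j = i \<and> 0 < a \<and> m = Poly_Mapping.single i (a - 1)"
      by simp
  qed (simp flip: single_add)
  show "Poly_Mapping.lookup (pdiff j (sconst c * hvar i ^ a)) m
      = Poly_Mapping.lookup (if j = i then sconst (of_nat a * c) * hvar i ^ (a - 1) else 0) m"
    unfolding sconst_mult_hvar_power lookup_pdiff lookup_single key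
    by (auto simp: lookup_single when_def)
qed

lemma hmode_neg: "hmode (- int (Suc n)) v = hvar (Suc n) * v"
proof -
  have "nat (- (- int (Suc n))) = Suc n"
    by (simp only: minus_minus nat_int)
  thus ?thesis
    unfolding hmode_def by simp
qed

lemma atLeastAtMost_neg_int_1:
  "{- int r..1} = insert 1 (insert 0 ((\<lambda>n. - int (Suc n)) ` {..<r}))"
proof (intro set_eqI iffI)
  fix m assume m: "m \<in> {- int r..1}"
  show "m \<in> insert 1 (insert 0 ((\<lambda>n. - int (Suc n)) ` {..<r}))"
  proof (cases "m < 0")
    case True
    hence "m = - int (Suc (nat (- m - 1)))" "nat (- m - 1) < r"
      using m by auto
    thus ?thesis by blast
  next
    case False
    with m show ?thesis by auto
  qed
qed auto

lemma hsq_neg_int: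
  assumes "\<forall>i\<ge>2. pdiff i v = 0"
  shows "hsq (- int r) v
    = (\<Sum>n<r. sconst (fls_nth (logL powi (- int r)) (- int (Suc n))) * (hvar (Suc n) * v))
      + sconst (fls_nth (logL powi (- int r)) 1) * pdiff 1 v"
proof -
  define c where "c m = fls_nth (logL powi (- int r)) m" for m
  have support: "{m. c m \<noteq> 0 \<and> hmode m v \<noteq> 0} \<subseteq> {- int r..1}"
  proof
    fix m assume m: "m \<in> {m. c m \<noteq> 0 \<and> hmode m v \<noteq> 0}"
    have "hmode m v = 0" if "2 \<le> m"
      using that assms by (simp add: hmode_def)
    moreover have "c m = 0" if "m < - int r"
      using that by (simp add: c_def fls_nth_logL_powi_neg)
    ultimately show "m \<in> {- int r..1}"
      using m by fastforce
  qed
  have "hsq (- int r) v = (\<Sum>m\<in>{- int r..1}. sconst (c m) * hmode m v)"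
    unfolding hsq_def c_def[symmetric] by (rule sum.mono_neutral_left) (use support in auto)
  also have "\<dots> = sconst (c 1) * hmode 1 v + (sconst (c 0) * hmode 0 v
      + (\<Sum>m\<in>(\<lambda>n. - int (Suc n)) ` {..<r}. sconst (c m) * hmode m v))"
    unfolding atLeastAtMost_neg_int_1 by (subst sum.insert; auto)+
  also have "(\<Sum>m\<in>(\<lambda>n. - int (Suc n)) ` {..<r}. sconst (c m) * hmode m v)
      = (\<Sum>n<r. sconst (c (- int (Suc n))) * hmode (- int (Suc n)) v)"
    by (subst sum.reindex) (auto simp: inj_on_def)
  also have "\<dots> = (\<Sum>n<r. sconst (c (- int (Suc n))) * (hvar (Suc n) * v))"
    by (simp only: hmode_neg)
  finally show ?thesis
    by (simp add: c_def hmode_def)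
qed

lemma hsq_minus_one:
  assumes "\<forall>i\<ge>2. pdiff i v = 0"
  shows "hsq (-1) v = hvar 1 * v - sconst (1/12) * pdiff 1 v"
  using hsq_neg_int[OF assms, of 1] fls_nth_logL_inverse by (simp add: sconst_def single_uminus)

definition hermite_coeff :: "nat \<Rightarrow> nat \<Rightarrow> rat" where
  "hermite_coeff t k = of_nat (t choose (2*k)) * fact (2*k) / (fact k * (-24) ^ k)"

text \<open>\<open>(x - (1/12) d/dx)^t 1\<close>, a rescaled Hermite polynomial in \<open>x = h(-1)\<close>.\<close>
definition hermite_h1 :: "nat \<Rightarrow> salg" where
  "hermite_h1 t = (\<Sum>k\<le>t. sconst (hermite_coeff t k) * hvar 1 ^ (t - 2*k))"

lemma hermite_coeff_0 [simp]: "hermite_coeff t 0 = 1"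
  by (simp add: hermite_coeff_def)

lemma hermite_coeff_eq_0: "t < 2*k \<Longrightarrow> hermite_coeff t k = 0"
  by (simp add: hermite_coeff_def)

lemma of_nat_choose_Suc_mult:
  "(of_nat (t choose Suc j) :: 'a::semiring_1) * of_nat (Suc j) = of_nat (t choose j) * of_nat (t - j)"
proof -
  have "(t choose Suc j) * Suc j = (t choose j) * (t - j)"
    using binomial_absorption[of j t] binomial_absorb_comp[of t j] by (simp add: mult.commute)
  thus ?thesis
    by (metis of_nat_mult)
qed

lemma hermite_coeff_Suc_Suc:
  "hermite_coeff (Suc t) (Suc k) = hermite_coeff t (Suc k) - of_nat (t - 2*k) * hermite_coeff t k / 12"
proof -
  have "hermite_coeff (Suc t) (Suc k) - hermite_coeff t (Suc k)
      = of_nat (t choose Suc (2*k)) * fact (2 * Suc k) / (fact (Suc k) * (-24) ^ Suc k)"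
    by (simp add: hermite_coeff_def diff_divide_distrib[symmetric] algebra_simps)
  also have "\<dots> = (of_nat (t choose Suc (2*k)) * of_nat (Suc (2*k))) * fact (2*k) * (2 * of_nat (Suc k))
      / (of_nat (Suc k) * fact k * ((-24) * (-24) ^ k))"
    by (simp add: algebra_simps)
  also have "\<dots> = - of_nat (t - 2*k) * hermite_coeff t k / 12"
  proof -
    have field: "C * T * F * (2 * K) / (K * G * (-24 * P)) = - T * (C * F / (G * P)) / 12"
      if "K \<noteq> 0" "G \<noteq> 0" "P \<noteq> 0" for C T F K G P :: rat
      using that by (simp add: field_simps)
    show ?thesis
      unfolding of_nat_choose_Suc_mult hermite_coeff_def by (rule field) simp_all
  qed
  finally show ?thesis
    by (simp add: algebra_simps)
qed

lemma pdiff_hermite_h1: "i \<noteq> 1 \<Longrightarrow> pdiff i (hermite_h1 t) = 0"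
  by (simp add: hermite_h1_def pdiff_sum pdiff_monomial)

lemma pdiff_1_hermite_h1:
  "pdiff 1 (hermite_h1 t) = (\<Sum>k\<le>t. sconst (of_nat (t - 2*k) * hermite_coeff t k) * hvar 1 ^ (t - Suc (2*k)))"
  by (simp add: hermite_h1_def pdiff_sum pdiff_monomial)

lemma hvar_1_mult_hermite_h1:
  "hvar 1 * hermite_h1 t
    = hvar 1 ^ Suc t + (\<Sum>k\<le>t. sconst (hermite_coeff t (Suc k)) * hvar 1 ^ (t - Suc (2*k)))"
proof -
  have "hvar 1 * hermite_h1 t = (\<Sum>k\<le>Suc t. sconst (hermite_coeff t k) * hvar 1 ^ Suc (t - 2*k))"
    by (simp add: hermite_h1_def sum_distrib_left hermite_coeff_eq_0 ac_simps)
  also have "\<dots> = hvar 1 ^ Suc t + (\<Sum>k\<le>t. sconst (hermite_coeff t (Suc k)) * hvar 1 ^ Suc (t - 2 * Suc k))"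
    by (subst sum.atMost_Suc_shift) simp
  also have "(\<Sum>k\<le>t. sconst (hermite_coeff t (Suc k)) * hvar 1 ^ Suc (t - 2 * Suc k))
      = (\<Sum>k\<le>t. sconst (hermite_coeff t (Suc k)) * hvar 1 ^ (t - Suc (2*k)))"
  proof (rule sum.cong)
    fix k
    show "sconst (hermite_coeff t (Suc k)) * hvar 1 ^ Suc (t - 2 * Suc k)
        = sconst (hermite_coeff t (Suc k)) * hvar 1 ^ (t - Suc (2*k))"
    proof (cases "2 * Suc k \<le> t")
      case True
      hence "Suc (t - 2 * Suc k) = t - Suc (2*k)"
        by simp
      thus ?thesis by (simp only:)
    qed (simp add: hermite_coeff_eq_0)
  qed simp
  finally show ?thesis .
qed

lemma hsq_minus_one_hermite_h1: "hsq (-1) (hermite_h1 t) = hermite_h1 (Suc t)"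
proof -
  have "hermite_h1 (Suc t)
      = hvar 1 ^ Suc t + (\<Sum>k\<le>t. sconst (hermite_coeff (Suc t) (Suc k)) * hvar 1 ^ (t - Suc (2*k)))"
    unfolding hermite_h1_def by (subst sum.atMost_Suc_shift) simp
  also have "\<dots> = hvar 1 ^ Suc t + (\<Sum>k\<le>t. sconst (hermite_coeff t (Suc k)) * hvar 1 ^ (t - Suc (2*k)))
      - (\<Sum>k\<le>t. sconst (of_nat (t - 2*k) * hermite_coeff t k / 12) * hvar 1 ^ (t - Suc (2*k)))"
    by (simp add: hermite_coeff_Suc_Suc sconst_diff left_diff_distrib sum_subtractf)
  also have "\<dots> = hvar 1 * hermite_h1 t - sconst (1/12) * pdiff 1 (hermite_h1 t)"
  proof -
    have "sconst (1/12) * pdiff 1 (hermite_h1 t)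
        = (\<Sum>k\<le>t. sconst (of_nat (t - 2*k) * hermite_coeff t k / 12) * hvar 1 ^ (t - Suc (2*k)))"
      unfolding pdiff_1_hermite_h1 sum_distrib_left
      by (intro sum.cong refl) (simp add: mult.assoc[symmetric] ac_simps flip: sconst_mult)
    thus ?thesis
      by (simp only: hvar_1_mult_hermite_h1 power_Suc)
  qed
  also have "\<dots> = hsq (-1) (hermite_h1 t)"
    by (rule hsq_minus_one[symmetric]) (simp add: pdiff_hermite_h1)
  finally show ?thesis ..
qed

lemma hsq_minus_one_iterate: "(hsq (-1) ^^ t) 1 = hermite_h1 t"
proof (induction t)
  case 0
  show ?case by (simp add: hermite_h1_def)
next
  case (Suc t)
  thus ?case by (simp add: hsq_minus_one_hermite_h1)
qed

lemma Scoef_sum_eq_hermite_h1: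
  assumes "1 \<le> r"
  shows "(\<Sum>n\<in>{n. Scoef r n \<noteq> 0}. \<Sum>k\<le>t.
        sconst (of_nat (t choose (2*k)) * fact n * Scoef r n * fact (2*k) / (fact k * (-24) ^ k))
        * hvar (n + 1) * hvar 1 ^ (t - 2*k))
    = (\<Sum>n<r. sconst (fact n * Scoef r n) * (hvar (Suc n) * hermite_h1 t))"
proof -
  have "(\<Sum>k\<le>t. sconst (of_nat (t choose (2*k)) * fact n * Scoef r n * fact (2*k) / (fact k * (-24) ^ k))
        * hvar (n + 1) * hvar 1 ^ (t - 2*k))
      = sconst (fact n * Scoef r n) * (hvar (Suc n) * hermite_h1 t)" for n
    unfolding hermite_h1_def sum_distrib_left
    by (intro sum.cong refl) (simp add: hermite_coeff_def sconst_mult[symmetric] ac_simps)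
  moreover have "(\<Sum>n\<in>{n. Scoef r n \<noteq> 0}. sconst (fact n * Scoef r n) * (hvar (Suc n) * hermite_h1 t))
      = (\<Sum>n<r. sconst (fact n * Scoef r n) * (hvar (Suc n) * hermite_h1 t))"
  proof (rule sum.mono_neutral_left)
    show "{n. Scoef r n \<noteq> 0} \<subseteq> {..<r}"
      using Scoef_eq_0[OF assms] by (force simp: not_less[symmetric])
  qed auto
  ultimately show ?thesis
    by simp
qed

lemma odd_binomial_sum_eq_pdiff_hermite_h1:
  "(\<Sum>k\<le>t. sconst (of_nat (t choose (2*k+1)) * b * fact (2*k+1) / (fact k * d * (-24) ^ k))
        * hvar 1 ^ (t - 2*k - 1))
    = sconst (b / d) * pdiff 1 (hermite_h1 t)"
proof -
  have field: "C * b * (S * F) / (K * d * P) = b / d * (T * (C0 * F / (K * P)))"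
    if "C * S = C0 * T" "K \<noteq> 0" "P \<noteq> 0" for C b S F K d P C0 T :: rat
  proof -
    have "C * b * (S * F) / (K * d * P) = (C * S) * b * F / (K * d * P)"
      by (simp add: ac_simps)
    also have "\<dots> = b / d * (T * (C0 * F / (K * P)))"
      unfolding that(1) using that(2,3) by (simp add: field_simps)
    finally show ?thesis .
  qed
  have coeff: "of_nat (t choose (2*k+1)) * b * fact (2*k+1) / (fact k * d * (-24) ^ k)
      = b / d * (of_nat (t - 2*k) * hermite_coeff t k)" for k
    unfolding hermite_coeff_def Suc_eq_plus1[symmetric] fact_Suc of_nat_mult
    by (rule field) (rule of_nat_choose_Suc_mult, simp_all)
  thus ?thesis
    unfolding pdiff_1_hermite_h1 sum_distrib_left
    by (intro sum.cong refl) (simp only: coeff sconst_mult mult.assoc diff_diff_left Suc_eq_plus1)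
qed

theorem mainTheorem5:
  fixes r t :: nat
  assumes "odd r" "r \<ge> 1" "odd t" "t \<ge> 1"
  shows "sconst (fact (r - 1)) * hsq (- int r) ((hsq (-1) ^^ t) 1) =
     (\<Sum>n\<in>{n. Scoef r n \<noteq> 0}. \<Sum>k\<le>t.
        sconst (of_nat (t choose (2*k)) * fact n * Scoef r n * fact (2*k)
                / (fact k * (-24) ^ k))
        * hvar (n + 1) * hvar 1 ^ (t - 2*k))
   - (\<Sum>k\<le>t.
        sconst (of_nat (t choose (2*k+1)) * bernoulli (r + 1) * fact (2*k+1)
                / (fact k * of_nat (r + 1) * (-24) ^ k))
        * hvar 1 ^ (t - 2*k - 1))"
proof -
  define c where "c m = fls_nth (logL powi (- int r)) m" for m
  have "\<forall>i\<ge>2. pdiff i (hermite_h1 t) = 0"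
    by (simp add: pdiff_hermite_h1)
  note hsq_expansion = hsq_neg_int[OF this, of r, folded c_def]
  have "sconst (fact (r - 1)) * hsq (- int r) ((hsq (-1) ^^ t) 1)
      = (\<Sum>n<r. sconst (fact (r - 1) * c (- int (Suc n))) * (hvar (Suc n) * hermite_h1 t))
        + sconst (fact (r - 1) * c 1) * pdiff 1 (hermite_h1 t)"
    unfolding hsq_minus_one_iterate hsq_expansion
    by (simp add: distrib_left sum_distrib_left sconst_mult mult.assoc)
  also have "\<dots> = (\<Sum>n<r. sconst (fact n * Scoef r n) * (hvar (Suc n) * hermite_h1 t))
        - sconst (bernoulli (r + 1) / of_nat (r + 1)) * pdiff 1 (hermite_h1 t)"
    using fact_mult_fls_nth_logL_powi_neg_less[of _ r] fact_mult_fls_nth_logL_powi_neg_1[OF \<open>r \<ge> 1\<close>]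
    by (simp add: c_def sconst_def single_uminus)
  finally show ?thesis
    by (simp only: Scoef_sum_eq_hermite_h1[OF \<open>r \<ge> 1\<close>] odd_binomial_sum_eq_pdiff_hermite_h1)
qed

end
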